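(* Let $(X,U)$ be a minimizer of Problem 1 (defined in the context). Then: (a) The linear matrix equation $$\begin{bmatrix} K & H \\ G & F \end{bmatrix}\begin{bmatrix} X \\ Z \end{bmatrix} = \begin{bmatrix} U \\ V \end{bmatrix}$$ has a unique solution $(K,H,G,F)$ with $K\in\mathbb{R}^{m\times n}$, $H\in\mathbb{R}^{m\times n(N-1)}$, $G\in\mathbb{R}^{n(N-1)\times n}$, $F\in\mathbb{R}^{n(N-1)\times n(N-1)}$. (b) For every initial state $x_0\in\mathbb{R}^n$, the closed loop of the plant $x(t+1)=Ax(t)+Bu(t)$, $x(0)=x_0$, with the compensator $z(t+1)=Fz(t)+Gx(t)$, $u(t)=Hz(t)+Kx(t)$, $z(0)=0$, generates the input sequence $u(t)=U(\mathrm{e}_{t+1}\otimes x_0)$ and state sequence $x(t)=X(\mathrm{e}_{t+1}\otimes x_0)$ for $t=0,1,\dots,N-1$ (where $\mathrm{e}_{t+1}\in\mathbb{R}^N$), and it drives the plant state to $x(N)=0$. (c) For every $x_0\in\{\mathrm{e}_1,\dots,\mathrm{e}_n\}$ (standard basis of $\mathbb{R}^n$), the output $y(t)=Cx(t)+Du(t)$ of this closed loop satisfies $-s\le y(t)\le s$ (componentwise) for $t=0,1,\dots,N-1$. (d) The closed-loop augmented system $\psi(t+1)=\mathcal{A}_{cl}\psi(t)$, with $\psi=(x,z)$ and $\mathcal{A}_{cl}=\begin{bmatrix}A+BK & BH\\ G & F\end{bmatrix}$, is internally stable (i.e. $\mathcal{A}_{cl}$ is Schur stable).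
   Context: Plant: discrete-time LTI system $x(t+1)=Ax(t)+Bu(t)$, $y(t)=Cx(t)+Du(t)$, with $x(t)\in\mathbb{R}^n$, $u(t)\in\mathbb{R}^m$ ($m\le n$), $y(t)\in\mathbb{R}^p$, real constant matrices $A,B,C,D$ of compatible sizes, and $(A,B)$ reachable. $N\ge 2$ is a horizon length. $\mathrm{e}_j$ denotes the $j$-th standard basis vector of the appropriate dimension. $P\in\mathbb{R}^{N\times N}$ is the nilpotent shift matrix $P=\begin{bmatrix}0 & 0\\ I_{N-1} & 0\end{bmatrix}$ (so $P\mathrm{e}_j=\mathrm{e}_{j+1}$ for $j<N$ and $P\mathrm{e}_N=0$). $\otimes$ is the Kronecker product. For a matrix $W$, $\|W\|_1=\sum_{i,j}|w_{ij}|$, and $\mathrm{abs}(W)$ is the entrywise absolute value. $\mathbf{1}_k\in\mathbb{R}^k$ is the all-ones vector. Given $s\in\mathbb{R}^p$ (componentwise nonnegative), Problem 1 is: minimize $\|U\|_1$ over $X\in\mathbb{R}^{n\times nN}$, $U\in\mathbb{R}^{m\times nN}$ subject to $AX+BU=X(P\otimes I_n)$, $X(\mathrm{e}_1\otimes I_n)=I_n$ (with $\mathrm{e}_1\in\mathbb{R}^N$), and $\mathrm{abs}(CX+DU)\le s(\mathbf{1}_n\otimes\mathbf{1}_N)^\top$ entrywise. Define $Z=\begin{bmatrix}0_{n(N-1)\times n} & I_{n(N-1)}\end{bmatrix}\in\mathbb{R}^{n(N-1)\times nN}$ and $V=Z(P\otimes I_n)$. *)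

theory Defs
  imports "Jordan_Normal_Form.Matrix" "Jordan_Normal_Form.Char_Poly"
begin

(* All indices are 0-based: the paper's e_j is unit_vec k (j-1). *)

definition kron_mat :: "real mat \<Rightarrow> real mat \<Rightarrow> real mat" where
  "kron_mat M1 M2 = mat (dim_row M1 * dim_row M2) (dim_col M1 * dim_col M2)
     (\<lambda>(i,j). M1 $$ (i div dim_row M2, j div dim_col M2) * M2 $$ (i mod dim_row M2, j mod dim_col M2))"

definition kron_vec :: "real vec \<Rightarrow> real vec \<Rightarrow> real vec" where
  "kron_vec a b = vec (dim_vec a * dim_vec b) (\<lambda>i. a $ (i div dim_vec b) * b $ (i mod dim_vec b))"

definition shiftP :: "nat \<Rightarrow> real mat" where
  "shiftP N = mat N N (\<lambda>(i,j). if i = j + 1 then 1 else 0)"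

definition norm1_mat :: "real mat \<Rightarrow> real" where
  "norm1_mat W = (\<Sum>i<dim_row W. \<Sum>j<dim_col W. \<bar>W $$ (i,j)\<bar>)"

definition reachable :: "nat \<Rightarrow> nat \<Rightarrow> real mat \<Rightarrow> real mat \<Rightarrow> bool" where
  "reachable n m A B \<longleftrightarrow> (\<forall>x \<in> carrier_vec n. \<exists>u. (\<forall>k. u k \<in> carrier_vec m) \<and>
      x = finsum_vec TYPE(real) n (\<lambda>k. (A ^\<^sub>m (n - 1 - k)) *\<^sub>v (B *\<^sub>v u k)) {..<n})"

definition feasible1 :: "nat \<Rightarrow> nat \<Rightarrow> nat \<Rightarrow> nat \<Rightarrow> real mat \<Rightarrow> real mat \<Rightarrow> real mat \<Rightarrow> real mat
    \<Rightarrow> real vec \<Rightarrow> real mat \<Rightarrow> real mat \<Rightarrow> bool" where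
  "feasible1 n m p N A B C D s X U \<longleftrightarrow>
     X \<in> carrier_mat n (n * N) \<and> U \<in> carrier_mat m (n * N) \<and>
     A * X + B * U = X * kron_mat (shiftP N) (1\<^sub>m n) \<and>
     X * kron_mat (mat_of_cols N [unit_vec N 0]) (1\<^sub>m n) = 1\<^sub>m n \<and>
     (\<forall>i<p. \<forall>j<n * N. \<bar>(C * X + D * U) $$ (i,j)\<bar> \<le> s $ i)"

definition minimizer1 :: "nat \<Rightarrow> nat \<Rightarrow> nat \<Rightarrow> nat \<Rightarrow> real mat \<Rightarrow> real mat \<Rightarrow> real mat \<Rightarrow> real mat
    \<Rightarrow> real vec \<Rightarrow> real mat \<Rightarrow> real mat \<Rightarrow> bool" where
  "minimizer1 n m p N A B C D s X U \<longleftrightarrow>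
     feasible1 n m p N A B C D s X U \<and>
     (\<forall>X' U'. feasible1 n m p N A B C D s X' U' \<longrightarrow> norm1_mat U \<le> norm1_mat U')"

definition Zmat :: "nat \<Rightarrow> nat \<Rightarrow> real mat" where
  "Zmat n N = mat (n * (N - 1)) (n * N) (\<lambda>(i,j). if j = i + n then 1 else 0)"

definition Vmat :: "nat \<Rightarrow> nat \<Rightarrow> real mat" where
  "Vmat n N = Zmat n N * kron_mat (shiftP N) (1\<^sub>m n)"

fun cl_traj :: "real mat \<Rightarrow> real mat \<Rightarrow> real mat \<Rightarrow> real mat \<Rightarrow> real mat \<Rightarrow> real mat
    \<Rightarrow> real vec \<Rightarrow> real vec \<Rightarrow> nat \<Rightarrow> real vec \<times> real vec" where
  "cl_traj A B K H G F x0 z0 0 = (x0, z0)"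
| "cl_traj A B K H G F x0 z0 (Suc t) =
     (let (x, z) = cl_traj A B K H G F x0 z0 t; u = H *\<^sub>v z + K *\<^sub>v x
      in (A *\<^sub>v x + B *\<^sub>v u, F *\<^sub>v z + G *\<^sub>v x))"

definition cl_x where "cl_x A B K H G F x0 z0 t = fst (cl_traj A B K H G F x0 z0 t)"
definition cl_z where "cl_z A B K H G F x0 z0 t = snd (cl_traj A B K H G F x0 z0 t)"
definition cl_u where
  "cl_u A B K H G F x0 z0 t = H *\<^sub>v cl_z A B K H G F x0 z0 t + K *\<^sub>v cl_x A B K H G F x0 z0 t"

definition schur_stable :: "real mat \<Rightarrow> bool" where
  "schur_stable M \<longleftrightarrow> (\<forall>ev. eigenvalue (map_mat complex_of_real M) ev \<longrightarrow> cmod ev < 1)"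

end

theory Submission
  imports Defs
begin

(* With S = P \<otimes> I_n, feasibility says A X + B U = X S, and the first block column of X is I_n.
   Hence T = [X; Z] is unit upper triangular, so [K H; G F] = [U; V] T\<inverse> is the unique solution
   of (a), and it satisfies K X + H Z = U, G X + F Z = Z S. By induction the closed loop started in
   (x0, 0) = T (e_1 \<otimes> x0) stays at T S^t (e_1 \<otimes> x0) = T (e_(t+1) \<otimes> x0): it runs through the
   columns of X and U, vanishes at t = N, and for x0 = e_i its output is a column of C X + D U,
   which the constraints bound by s. The same identities give A_cl T = T S, so A_cl is similar to
   the nilpotent S and all its eigenvalues are 0. Only feasibility of (X, U) is used, not its
   optimality, nor reachability or m \<le> n. *)

definition shift_mat :: "nat \<Rightarrow> nat \<Rightarrow> real mat" where
  "shift_mat k d = mat k k (\<lambda>(i,j). if i = j + d then 1 else 0)"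

lemma shift_mat_carrier [simp]: "shift_mat k d \<in> carrier_mat k k"
  by (simp add: shift_mat_def)

lemma shift_mat_mult: "shift_mat k a * shift_mat k b = shift_mat k (a + b)"
proof (rule eq_matI)
  fix i j assume "i < dim_row (shift_mat k (a + b))" "j < dim_col (shift_mat k (a + b))"
  hence ij: "i < k" "j < k" by (auto simp: shift_mat_def)
  have "(shift_mat k a * shift_mat k b) $$ (i,j)
      = (\<Sum>l<k. (if i = l + a then 1 else 0) * (if l = j + b then 1 else 0))"
    using ij by (simp add: shift_mat_def scalar_prod_def lessThan_atLeast0)
  also have "\<dots> = (\<Sum>l<k. if l = j + b then (if i = j + b + a then 1 else 0) else 0)"
    by (rule sum.cong) auto
  also have "\<dots> = shift_mat k (a + b) $$ (i,j)"
    using ij by (auto simp: shift_mat_def)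
  finally show "(shift_mat k a * shift_mat k b) $$ (i,j) = shift_mat k (a + b) $$ (i,j)" .
qed (auto simp: shift_mat_def)

lemma shift_mat_pow: "shift_mat k d ^\<^sub>m j = shift_mat k (j * d)"
proof (induction j)
  case 0
  show ?case by (rule eq_matI) (auto simp: shift_mat_def)
next
  case (Suc j)
  then show ?case by (simp add: shift_mat_mult add.commute)
qed

lemma shift_mat_eq_zero: "k \<le> d \<Longrightarrow> shift_mat k d = 0\<^sub>m k k"
  by (rule eq_matI) (auto simp: shift_mat_def)

lemma kron_shiftP_one_mat: "kron_mat (shiftP N) (1\<^sub>m n) = shift_mat (n * N) n"
proof (rule eq_matI)
  fix i j assume "i < dim_row (shift_mat (n * N) n)" "j < dim_col (shift_mat (n * N) n)"
  hence ij: "i < n * N" "j < n * N" by (auto simp: shift_mat_def)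
  hence "n > 0" by (cases n) auto
  moreover have "i div n < N" "j div n < N"
    using ij by (auto simp: less_mult_imp_div_less mult.commute)
  moreover have "(i div n = j div n + 1 \<and> i mod n = j mod n) \<longleftrightarrow> i = j + n"
    using \<open>n > 0\<close> by (metis add.commute div_mult_mod_eq mod_add_self2 div_add_self2
        less_numeral_extra(3) add_mult_distrib2 nat_mult_1_right)
  ultimately show "kron_mat (shiftP N) (1\<^sub>m n) $$ (i, j) = shift_mat (n * N) n $$ (i, j)"
    using ij by (auto simp: kron_mat_def shiftP_def shift_mat_def mult.commute)
qed (auto simp: kron_mat_def shiftP_def shift_mat_def mult.commute)

lemma dim_kron_vec [simp]: "dim_vec (kron_vec a b) = dim_vec a * dim_vec b"
  by (simp add: kron_vec_def)

lemma index_kron_vec_unit_vec: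
  assumes x: "x \<in> carrier_vec n" and i: "i < n * N"
  shows "kron_vec (unit_vec N t) x $ i = (if i div n = t then x $ (i mod n) else 0)"
proof -
  have "i div n < N" using i by (auto simp: less_mult_imp_div_less mult.commute)
  thus ?thesis using x i by (auto simp: kron_vec_def mult.commute unit_vec_def)
qed

lemma kron_vec_unit_vec_carrier [simp]:
  "x \<in> carrier_vec n \<Longrightarrow> kron_vec (unit_vec N t) x \<in> carrier_vec (n * N)"
  by (auto simp: kron_vec_def mult.commute)

lemma shift_mat_mult_kron_vec_unit_vec:
  assumes x: "x \<in> carrier_vec n"
  shows "shift_mat (n * N) n *\<^sub>v kron_vec (unit_vec N t) x = kron_vec (unit_vec N (Suc t)) x"
proof (rule eq_vecI)
  fix i assume "i < dim_vec (kron_vec (unit_vec N (Suc t)) x)"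
  hence i: "i < n * N" using x by (simp add: mult.commute)
  let ?w = "kron_vec (unit_vec N t) x"
  have "(shift_mat (n * N) n *\<^sub>v ?w) $ i = (\<Sum>j<n * N. (if i = j + n then 1 else 0) * ?w $ j)"
    using i x by (simp add: shift_mat_def scalar_prod_def lessThan_atLeast0 mult.commute)
  also have "\<dots> = (\<Sum>j<n * N. if j = i - n then (if n \<le> i then ?w $ (i - n) else 0) else 0)"
    by (rule sum.cong) auto
  also have "\<dots> = (if n \<le> i then ?w $ (i - n) else 0)" using i by auto
  also have "\<dots> = kron_vec (unit_vec N (Suc t)) x $ i"
  proof (cases "n \<le> i")
    case True
    have "n > 0" using i by (cases n) auto
    then have "i div n = (i - n) div n + 1" "i mod n = (i - n) mod n"
      using True by (simp_all add: le_div_geq le_mod_geq)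
    then show ?thesis
      using True i index_kron_vec_unit_vec[OF x i] index_kron_vec_unit_vec[OF x, of "i - n" N t] by auto
  qed (use index_kron_vec_unit_vec[OF x i] in auto)
  finally show "(shift_mat (n * N) n *\<^sub>v ?w) $ i = kron_vec (unit_vec N (Suc t)) x $ i" .
qed (use x in \<open>auto simp: shift_mat_def\<close>)

lemma kron_vec_unit_vec_beyond:
  assumes "x \<in> carrier_vec n" and "N \<le> t"
  shows "kron_vec (unit_vec N t) x = 0\<^sub>v (n * N)"
proof (rule eq_vecI)
  fix i assume "i < dim_vec (0\<^sub>v (n * N))"
  hence i: "i < n * N" by simp
  hence "i div n < N" by (auto simp: less_mult_imp_div_less mult.commute)
  thus "kron_vec (unit_vec N t) x $ i = 0\<^sub>v (n * N) $ i"
    using index_kron_vec_unit_vec[OF assms(1) i] i assms(2) by auto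
qed (use assms in simp)

lemma kron_vec_unit_vec_unit_vec:
  assumes i: "i < n"
  shows "kron_vec (unit_vec N t) (unit_vec n i) = unit_vec (n * N) (t * n + i)"
proof (rule eq_vecI)
  fix k assume "k < dim_vec (unit_vec (n * N) (t * n + i))"
  hence k: "k < n * N" by simp
  have "(k div n = t \<and> k mod n = i) \<longleftrightarrow> k = t * n + i"
    using i by (metis add.commute div_mult_mod_eq mod_mult_self2 mod_less div_mult_self1 div_less
        add_0 gr_implies_not0 mult.commute)
  thus "kron_vec (unit_vec N t) (unit_vec n i) $ k = unit_vec (n * N) (t * n + i) $ k"
    using index_kron_vec_unit_vec[OF unit_vec_carrier k] i k by (auto simp: unit_vec_def)
qed (auto simp: kron_vec_def mult.commute)

lemma kron_mat_col_one_mult_vec: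
  assumes a: "a \<in> carrier_vec N" and x: "x \<in> carrier_vec n"
  shows "kron_mat (mat_of_cols N [a]) (1\<^sub>m n) *\<^sub>v x = kron_vec a x"
proof (rule eq_vecI)
  fix i assume "i < dim_vec (kron_vec a x)"
  hence i: "i < N * n" using a x by (simp add: kron_vec_def)
  hence "n > 0" by (cases n) auto
  with i have "i div n < N" "i mod n < n" by (auto simp: less_mult_imp_div_less)
  hence "(kron_mat (mat_of_cols N [a]) (1\<^sub>m n) *\<^sub>v x) $ i
      = (\<Sum>j<n. a $ (i div n) * (if i mod n = j then 1 else 0) * x $ j)"
    using i a x by (simp add: kron_mat_def mat_of_cols_def scalar_prod_def lessThan_atLeast0)
  also have "\<dots> = (\<Sum>j<n. if j = i mod n then a $ (i div n) * x $ j else 0)"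
    by (rule sum.cong) auto
  also have "\<dots> = kron_vec a x $ i"
    using i a x \<open>i mod n < n\<close> by (simp add: kron_vec_def)
  finally show "(kron_mat (mat_of_cols N [a]) (1\<^sub>m n) *\<^sub>v x) $ i = kron_vec a x $ i" .
qed (use a x in \<open>auto simp: kron_mat_def kron_vec_def\<close>)

lemma split_block_four_block_mat:
  assumes "A \<in> carrier_mat nr1 nc1" "B \<in> carrier_mat nr1 nc2"
    "C \<in> carrier_mat nr2 nc1" "D \<in> carrier_mat nr2 nc2"
  shows "split_block (four_block_mat A B C D) nr1 nc1 = (A, B, C, D)"
proof -
  have "dim_row (four_block_mat A B C D) = nr1 + nr2" "dim_col (four_block_mat A B C D) = nc1 + nc2"
    using assms by auto
  then show ?thesis
    unfolding split_block_def Let_def using assms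
    by (simp add: mat_eq_iff)
qed

lemma four_block_mat_eq_iff:
  assumes "A \<in> carrier_mat nr1 nc1" "B \<in> carrier_mat nr1 nc2"
    "C \<in> carrier_mat nr2 nc1" "D \<in> carrier_mat nr2 nc2"
    and "A' \<in> carrier_mat nr1 nc1" "B' \<in> carrier_mat nr1 nc2"
    "C' \<in> carrier_mat nr2 nc1" "D' \<in> carrier_mat nr2 nc2"
  shows "four_block_mat A B C D = four_block_mat A' B' C' D' \<longleftrightarrow> A = A' \<and> B = B' \<and> C = C' \<and> D = D'"
proof
  assume "four_block_mat A B C D = four_block_mat A' B' C' D'"
  then have "split_block (four_block_mat A B C D) nr1 nc1 = split_block (four_block_mat A' B' C' D') nr1 nc1"
    by simp
  then show "A = A' \<and> B = B' \<and> C = C' \<and> D = D'"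
    unfolding split_block_four_block_mat[OF assms(1-4)] split_block_four_block_mat[OF assms(5-8)] by simp
qed auto

lemma append_rows_eq_iff:
  assumes "A \<in> carrier_mat nr1 nc" "B \<in> carrier_mat nr2 nc"
    and "A' \<in> carrier_mat nr1 nc" "B' \<in> carrier_mat nr2 nc"
  shows "A @\<^sub>r B = A' @\<^sub>r B' \<longleftrightarrow> A = A' \<and> B = B'"
proof -
  have "dim_row A = nr1" "dim_row B = nr2" "dim_row A' = nr1" "dim_row B' = nr2"
    using assms by auto
  then show ?thesis
    unfolding append_rows_def
    using four_block_mat_eq_iff[OF assms(1) zero_carrier_mat assms(2) zero_carrier_mat
        assms(3) zero_carrier_mat assms(4) zero_carrier_mat]
    by simp
qed

lemma four_block_mat_mult_append_rows:
  fixes K H G F X Z :: "'a :: semiring_0 mat"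
  assumes c: "K \<in> carrier_mat r1 n" "H \<in> carrier_mat r1 q" "G \<in> carrier_mat r2 n" "F \<in> carrier_mat r2 q"
    and X: "X \<in> carrier_mat n k" and Z: "Z \<in> carrier_mat q k"
  shows "four_block_mat K H G F * (X @\<^sub>r Z) = (K * X + H * Z) @\<^sub>r (G * X + F * Z)"
proof -
  have "four_block_mat K H G F * (X @\<^sub>r Z) = four_block_mat K H G F * four_block_mat X (0\<^sub>m n 0) Z (0\<^sub>m q 0)"
    unfolding append_rows_def using X Z by auto
  also have "\<dots> = four_block_mat (K * X + H * Z) (K * 0\<^sub>m n 0 + H * 0\<^sub>m q 0)
                     (G * X + F * Z) (G * 0\<^sub>m n 0 + F * 0\<^sub>m q 0)"
    by (rule mult_four_block_mat[OF c X _ Z]) auto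
  also have "K * 0\<^sub>m n 0 + H * 0\<^sub>m q 0 = 0\<^sub>m r1 0" using c by (intro eq_matI) auto
  also have "G * 0\<^sub>m n 0 + F * 0\<^sub>m q 0 = 0\<^sub>m r2 0" using c by (intro eq_matI) auto
  also have "four_block_mat (K * X + H * Z) (0\<^sub>m r1 0) (G * X + F * Z) (0\<^sub>m r2 0)
      = (K * X + H * Z) @\<^sub>r (G * X + F * Z)"
    unfolding append_rows_def using c X Z by auto
  finally show ?thesis .
qed

lemma append_rows_mult:
  fixes A B C :: "'a :: semiring_0 mat"
  assumes A: "A \<in> carrier_mat nr1 nc" and B: "B \<in> carrier_mat nr2 nc" and C: "C \<in> carrier_mat nc k"
  shows "(A @\<^sub>r B) * C = (A * C) @\<^sub>r (B * C)"
proof -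
  have "C = four_block_mat C (0\<^sub>m nc 0) (0\<^sub>m 0 k) (0\<^sub>m 0 0)"
    using C by (intro eq_matI) auto
  then have "(A @\<^sub>r B) * C = four_block_mat A (0\<^sub>m nr1 0) B (0\<^sub>m nr2 0) * four_block_mat C (0\<^sub>m nc 0) (0\<^sub>m 0 k) (0\<^sub>m 0 0)"
    unfolding append_rows_def using A B by auto
  also have "\<dots> = four_block_mat (A * C + 0\<^sub>m nr1 0 * 0\<^sub>m 0 k) (A * 0\<^sub>m nc 0 + 0\<^sub>m nr1 0 * 0\<^sub>m 0 0)
                     (B * C + 0\<^sub>m nr2 0 * 0\<^sub>m 0 k) (B * 0\<^sub>m nc 0 + 0\<^sub>m nr2 0 * 0\<^sub>m 0 0)"
    by (rule mult_four_block_mat[OF A _ B _ C]) auto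
  also have "\<dots> = (A * C) @\<^sub>r (B * C)"
    unfolding append_rows_def using A B C by (auto intro!: cong_four_block_mat eq_matI)
  finally show ?thesis .
qed

lemma det_unit_upper_triangular:
  fixes T :: "'a :: comm_ring_1 mat"
  assumes T: "T \<in> carrier_mat k k"
    and lower: "\<And>i j. i < k \<Longrightarrow> j < i \<Longrightarrow> T $$ (i,j) = 0"
    and diag: "\<And>i. i < k \<Longrightarrow> T $$ (i,i) = 1"
  shows "det T = 1"
proof -
  have "det T = prod_list (diag_mat T)"
    using T lower by (intro det_upper_triangular) (auto simp: upper_triangular_def)
  also have "diag_mat T = replicate k 1"
    using T diag by (auto simp: diag_mat_def intro!: nth_equalityI)
  finally show ?thesis by simp
qed

lemma ex1_left_solution:
  fixes T M :: "'a :: field mat"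
  assumes T: "T \<in> carrier_mat k k" "det T \<noteq> 0" and M: "M \<in> carrier_mat r k"
  shows "\<exists>!W. W \<in> carrier_mat r k \<and> W * T = M"
proof -
  have "T \<in> Units (ring_mat TYPE('a) k undefined)"
    using det_non_zero_imp_unit[OF T] .
  then obtain Ti where Ti: "Ti \<in> carrier_mat k k" "T * Ti = 1\<^sub>m k" "Ti * T = 1\<^sub>m k"
    unfolding Units_def by (auto simp: ring_mat_def)
  have "W = M * Ti" if W: "W \<in> carrier_mat r k" "W * T = M" for W
  proof -
    have "W = W * (T * Ti)" using W Ti by simp
    also have "\<dots> = M * Ti" using W T Ti by (metis assoc_mult_mat)
    finally show ?thesis .
  qed
  moreover have "M * Ti * T = M"
    using M T Ti by (metis assoc_mult_mat right_mult_one_mat)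
  moreover have "M * Ti \<in> carrier_mat r k" using M Ti by simp
  ultimately show ?thesis by blast
qed

lemma ex1_four_block_left_solution:
  fixes T M :: "'a :: field mat"
  assumes T: "T \<in> carrier_mat (c1 + c2) (c1 + c2)" "det T \<noteq> 0"
    and M: "M \<in> carrier_mat (r1 + r2) (c1 + c2)"
  shows "\<exists>K H G F. K \<in> carrier_mat r1 c1 \<and> H \<in> carrier_mat r1 c2 \<and>
      G \<in> carrier_mat r2 c1 \<and> F \<in> carrier_mat r2 c2 \<and> four_block_mat K H G F * T = M \<and>
      (\<forall>K' H' G' F'. K' \<in> carrier_mat r1 c1 \<and> H' \<in> carrier_mat r1 c2 \<and>
         G' \<in> carrier_mat r2 c1 \<and> F' \<in> carrier_mat r2 c2 \<and> four_block_mat K' H' G' F' * T = M \<longrightarrow>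
         K' = K \<and> H' = H \<and> G' = G \<and> F' = F)"
proof -
  obtain W where W: "W \<in> carrier_mat (r1 + r2) (c1 + c2)" "W * T = M"
    and unique: "\<And>W'. W' \<in> carrier_mat (r1 + r2) (c1 + c2) \<Longrightarrow> W' * T = M \<Longrightarrow> W' = W"
    using ex1_left_solution[OF T M] by metis
  obtain K H G F where split: "split_block W r1 c1 = (K, H, G, F)"
    by (cases "split_block W r1 c1") auto
  have blocks: "K \<in> carrier_mat r1 c1" "H \<in> carrier_mat r1 c2" "G \<in> carrier_mat r2 c1" "F \<in> carrier_mat r2 c2"
    and W_eq: "W = four_block_mat K H G F"
    using split_block[OF split, of r2 c2] W by auto
  have "K' = K \<and> H' = H \<and> G' = G \<and> F' = F"
    if blocks': "K' \<in> carrier_mat r1 c1" "H' \<in> carrier_mat r1 c2" "G' \<in> carrier_mat r2 c1"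
      "F' \<in> carrier_mat r2 c2" and sol: "four_block_mat K' H' G' F' * T = M" for K' H' G' F'
  proof -
    have "four_block_mat K' H' G' F' = four_block_mat K H G F"
      unfolding W_eq[symmetric] using blocks' sol by (intro unique) auto
    then show ?thesis
      using four_block_mat_eq_iff[OF blocks' blocks] by simp
  qed
  moreover have "four_block_mat K H G F * T = M" using W W_eq by simp
  ultimately show ?thesis using blocks by blast
qed

lemma mult_unit_vec_eq_col:
  fixes W :: "'a :: semiring_1 mat"
  assumes "W \<in> carrier_mat r k" and "l < k"
  shows "W *\<^sub>v unit_vec k l = col W l"
  using col_mult2[OF assms(1) one_carrier_mat assms(2)] right_mult_one_mat[OF assms(1)] assms(2)
  by simp

lemma mult_kron_vec_first_unit_vec:
  assumes X: "X \<in> carrier_mat r (n * N)"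
    and X_first: "X * kron_mat (mat_of_cols N [unit_vec N 0]) (1\<^sub>m n) = 1\<^sub>m n"
    and x: "x \<in> carrier_vec n"
  shows "X *\<^sub>v kron_vec (unit_vec N 0) x = x"
proof -
  have E: "kron_mat (mat_of_cols N [unit_vec N 0]) (1\<^sub>m n) \<in> carrier_mat (n * N) n"
    by (simp add: kron_mat_def mult.commute)
  have "X *\<^sub>v kron_vec (unit_vec N 0) x = X *\<^sub>v (kron_mat (mat_of_cols N [unit_vec N 0]) (1\<^sub>m n) *\<^sub>v x)"
    using kron_mat_col_one_mult_vec[OF unit_vec_carrier x] by simp
  also have "\<dots> = x"
    using X E x X_first by (simp flip: assoc_mult_mat_vec)
  finally show ?thesis .
qed

lemma add_mult_diff_one:
  fixes n N :: nat
  assumes "0 < N"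
  shows "n + n * (N - 1) = n * N"
  using assms by (cases N) auto

lemma Zmat_carrier [simp]: "Zmat n N \<in> carrier_mat (n * (N - 1)) (n * N)"
  by (simp add: Zmat_def)

lemma Vmat_eq: "Vmat n N = Zmat n N * shift_mat (n * N) n"
  by (simp add: Vmat_def kron_shiftP_one_mat)

lemma Zmat_mult_kron_vec_first_unit_vec:
  assumes x: "x \<in> carrier_vec n" and N: "N > 0"
  shows "Zmat n N *\<^sub>v kron_vec (unit_vec N 0) x = 0\<^sub>v (n * (N - 1))"
proof (rule eq_vecI)
  fix i assume "i < dim_vec (0\<^sub>v (n * (N - 1)))"
  hence i: "i < n * (N - 1)" by simp
  have iN: "i + n < n * N" using i N by (cases N) auto
  have "n > 0" using i by (cases n) auto
  let ?w = "kron_vec (unit_vec N 0) x"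
  have "(Zmat n N *\<^sub>v ?w) $ i = (\<Sum>j<n * N. ?w $ j * (if j = i + n then 1 else 0))"
    using i x by (simp add: Zmat_def scalar_prod_def lessThan_atLeast0 mult.commute)
  also have "\<dots> = (\<Sum>j<n * N. if j = i + n then ?w $ j else 0)"
    by (rule sum.cong) auto
  also have "\<dots> = 0"
    using iN \<open>n > 0\<close> index_kron_vec_unit_vec[OF x iN] by auto
  finally show "(Zmat n N *\<^sub>v ?w) $ i = 0\<^sub>v (n * (N - 1)) $ i" using i by simp
qed (auto simp: Zmat_def)

lemma det_append_rows_Zmat:
  assumes X: "X \<in> carrier_mat n (n * N)" and N: "N > 0"
    and X_first: "\<And>i j. i < n \<Longrightarrow> j < n \<Longrightarrow> X $$ (i,j) = (if i = j then 1 else 0)"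
  shows "det (X @\<^sub>r Zmat n N) = 1"
proof -
  note nq = add_mult_diff_one[OF N, of n]
  have T: "X @\<^sub>r Zmat n N \<in> carrier_mat (n * N) (n * N)"
    using carrier_append_rows[OF X Zmat_carrier] nq by simp
  have entry: "(X @\<^sub>r Zmat n N) $$ (i,j) = (if i < n then X $$ (i,j) else if j = i then 1 else 0)"
    if "i < n * N" "j < n * N" for i j
    using that X nq by (auto simp: append_rows_def Zmat_def)
  show ?thesis
    by (rule det_unit_upper_triangular[OF T]) (auto simp: entry X_first)
qed

lemma nilpotent_imp_schur_stable:
  assumes M: "M \<in> carrier_mat k k" and nil: "M ^\<^sub>m j = 0\<^sub>m k k"
  shows "schur_stable M"
  unfolding schur_stable_def
proof (intro allI impI)
  fix ev assume "eigenvalue (map_mat complex_of_real M) ev"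
  then obtain v where v: "eigenvector (map_mat complex_of_real M) v ev"
    unfolding eigenvalue_def by auto
  have Mc: "map_mat complex_of_real M \<in> carrier_mat k k" using M by simp
  have v_carrier: "v \<in> carrier_vec k" and v_nz: "v \<noteq> 0\<^sub>v k"
    using v Mc unfolding eigenvector_def by auto
  have "map_mat complex_of_real M ^\<^sub>m j = map_mat complex_of_real (M ^\<^sub>m j)"
    by (rule of_real_hom.mat_hom_pow[OF M, symmetric])
  also have "\<dots> = 0\<^sub>m k k" unfolding nil by (rule eq_matI) auto
  moreover have "0\<^sub>m k k *\<^sub>v v = 0\<^sub>v k"
    using v_carrier by (intro eq_vecI) (auto simp: scalar_prod_def)
  ultimately have "ev ^ j \<cdot>\<^sub>v v = 0\<^sub>v k"
    using eigenvector_pow[OF Mc v, of j] by simp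
  moreover obtain l where "l < k" "v $ l \<noteq> 0"
    using v_carrier v_nz by (metis eq_vecI carrier_vecD index_zero_vec)
  ultimately have "ev ^ j = 0"
    by (metis carrier_vecD index_smult_vec(1) index_zero_vec(1) mult_eq_0_iff v_carrier)
  then show "cmod ev < 1" by simp
qed

lemma pow_mult_eq_mult_pow:
  fixes M T S :: "'a :: semiring_1 mat"
  assumes M: "M \<in> carrier_mat k k" and T: "T \<in> carrier_mat k k" and S: "S \<in> carrier_mat k k"
    and MT: "M * T = T * S"
  shows "M ^\<^sub>m j * T = T * S ^\<^sub>m j"
proof (induction j)
  case 0
  show ?case using M T S by simp
next
  case (Suc j)
  have pows: "M ^\<^sub>m j \<in> carrier_mat k k" "S ^\<^sub>m j \<in> carrier_mat k k" using M S by auto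
  have "M ^\<^sub>m Suc j * T = M ^\<^sub>m j * (M * T)"
    unfolding pow_mat.simps(2) by (rule assoc_mult_mat[OF pows(1) M T])
  also have "\<dots> = (M ^\<^sub>m j * T) * S"
    unfolding MT by (rule assoc_mult_mat[OF pows(1) T S, symmetric])
  also have "\<dots> = T * S ^\<^sub>m Suc j"
    unfolding Suc pow_mat.simps(2) by (rule assoc_mult_mat[OF T pows(2) S])
  finally show ?case .
qed

lemma similar_to_nilpotent_imp_schur_stable:
  assumes M: "M \<in> carrier_mat k k" and T: "T \<in> carrier_mat k k" "det T \<noteq> 0"
    and S: "S \<in> carrier_mat k k" and MT: "M * T = T * S" and nil: "S ^\<^sub>m j = 0\<^sub>m k k"
  shows "schur_stable M"
proof (rule nilpotent_imp_schur_stable[OF M])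
  have "M ^\<^sub>m j * T = 0\<^sub>m k k"
    using pow_mult_eq_mult_pow[OF M T(1) S MT] nil T by simp
  moreover have "0\<^sub>m k k * T = 0\<^sub>m k k" using T by simp
  moreover have "M ^\<^sub>m j \<in> carrier_mat k k" "0\<^sub>m k k \<in> carrier_mat k k" using M by auto
  moreover have "\<exists>!W. W \<in> carrier_mat k k \<and> W * T = 0\<^sub>m k k"
    by (rule ex1_left_solution[OF T zero_carrier_mat])
  ultimately show "M ^\<^sub>m j = 0\<^sub>m k k" by blast
qed

lemma cl_x_Suc:
  "cl_x A B K H G F x0 z0 (Suc t) = A *\<^sub>v cl_x A B K H G F x0 z0 t + B *\<^sub>v cl_u A B K H G F x0 z0 t"
  by (simp add: cl_x_def cl_u_def cl_z_def split: prod.split)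

lemma cl_z_Suc:
  "cl_z A B K H G F x0 z0 (Suc t) = F *\<^sub>v cl_z A B K H G F x0 z0 t + G *\<^sub>v cl_x A B K H G F x0 z0 t"
  by (simp add: cl_x_def cl_z_def split: prod.split)

lemma add_mult_mat_mult_vec:
  fixes M1 M2 P Q :: "'a :: comm_semiring_0 mat"
  assumes "M1 \<in> carrier_mat r a" "P \<in> carrier_mat a k" "M2 \<in> carrier_mat r b" "Q \<in> carrier_mat b k"
    and "v \<in> carrier_vec k"
  shows "(M1 * P + M2 * Q) *\<^sub>v v = M1 *\<^sub>v (P *\<^sub>v v) + M2 *\<^sub>v (Q *\<^sub>v v)"
  using assms by (subst add_mult_distrib_mat_vec[of _ r k]) auto

lemma closed_loop_trajectory:
  fixes A B K H G F X U Z S :: "real mat"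
  assumes A: "A \<in> carrier_mat n n" and B: "B \<in> carrier_mat n m"
    and K: "K \<in> carrier_mat m n" and H: "H \<in> carrier_mat m q"
    and G: "G \<in> carrier_mat q n" and F: "F \<in> carrier_mat q q"
    and X: "X \<in> carrier_mat n k" and U: "U \<in> carrier_mat m k" and Z: "Z \<in> carrier_mat q k"
    and S: "S \<in> carrier_mat k k"
    and plant: "A * X + B * U = X * S"
    and input: "K * X + H * Z = U" and compensator: "G * X + F * Z = Z * S"
    and \<xi>: "\<And>t. \<xi> t \<in> carrier_vec k" "\<And>t. \<xi> (Suc t) = S *\<^sub>v \<xi> t"
  shows "cl_x A B K H G F (X *\<^sub>v \<xi> 0) (Z *\<^sub>v \<xi> 0) t = X *\<^sub>v \<xi> t \<and>
         cl_z A B K H G F (X *\<^sub>v \<xi> 0) (Z *\<^sub>v \<xi> 0) t = Z *\<^sub>v \<xi> t \<and>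
         cl_u A B K H G F (X *\<^sub>v \<xi> 0) (Z *\<^sub>v \<xi> 0) t = U *\<^sub>v \<xi> t"
proof -
  have input_vec: "U *\<^sub>v \<xi> t = H *\<^sub>v (Z *\<^sub>v \<xi> t) + K *\<^sub>v (X *\<^sub>v \<xi> t)" for t
    using add_mult_mat_mult_vec[OF K X H Z \<xi>(1)] input X Z K H \<xi>
    by (simp add: comm_add_vec[of _ m])
  have "cl_x A B K H G F (X *\<^sub>v \<xi> 0) (Z *\<^sub>v \<xi> 0) t = X *\<^sub>v \<xi> t \<and>
        cl_z A B K H G F (X *\<^sub>v \<xi> 0) (Z *\<^sub>v \<xi> 0) t = Z *\<^sub>v \<xi> t"
  proof (induction t)
    case 0
    show ?case by (simp add: cl_x_def cl_z_def)
  next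
    case (Suc t)
    have "X *\<^sub>v \<xi> (Suc t) = A *\<^sub>v (X *\<^sub>v \<xi> t) + B *\<^sub>v (U *\<^sub>v \<xi> t)"
      using add_mult_mat_mult_vec[OF A X B U \<xi>(1)] plant X S \<xi> by simp
    moreover have "Z *\<^sub>v \<xi> (Suc t) = F *\<^sub>v (Z *\<^sub>v \<xi> t) + G *\<^sub>v (X *\<^sub>v \<xi> t)"
      using add_mult_mat_mult_vec[OF G X F Z \<xi>(1)] compensator Z S \<xi> X F G
      by (simp add: comm_add_vec[of _ q])
    ultimately show ?case
      using Suc input_vec by (simp add: cl_x_Suc cl_z_Suc cl_u_def)
  qed
  then show ?thesis
    using input_vec by (simp add: cl_u_def)
qed

lemma closed_loop_mat_intertwines:
  fixes A B K H G F X U Z S :: "real mat"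
  assumes A: "A \<in> carrier_mat n n" and B: "B \<in> carrier_mat n m"
    and K: "K \<in> carrier_mat m n" and H: "H \<in> carrier_mat m q"
    and G: "G \<in> carrier_mat q n" and F: "F \<in> carrier_mat q q"
    and X: "X \<in> carrier_mat n k" and U: "U \<in> carrier_mat m k" and Z: "Z \<in> carrier_mat q k"
    and S: "S \<in> carrier_mat k k"
    and plant: "A * X + B * U = X * S"
    and input: "K * X + H * Z = U" and compensator: "G * X + F * Z = Z * S"
  shows "four_block_mat (A + B * K) (B * H) G F * (X @\<^sub>r Z) = (X @\<^sub>r Z) * S"
proof -
  have "(A + B * K) * X + B * H * Z = A * X + B * (K * X) + B * (H * Z)"
    using A B K H X Z by (simp add: add_mult_distrib_mat assoc_mult_mat[of B n m])
  also have "\<dots> = A * X + B * (K * X + H * Z)"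
  proof -
    have "B * (K * X + H * Z) = B * (K * X) + B * (H * Z)"
      by (rule mult_add_distrib_mat[OF B]) (use K X H Z in auto)
    then show ?thesis
      using A B K H X Z by (simp add: assoc_add_mat[of _ n k])
  qed
  also have "\<dots> = X * S" using input plant by simp
  finally have "(A + B * K) * X + B * H * Z = X * S" .
  moreover have "A + B * K \<in> carrier_mat n n" "B * H \<in> carrier_mat n q"
    using A B K H by auto
  ultimately show ?thesis
    using four_block_mat_mult_append_rows[of "A + B * K" n n "B * H" q G _ F X _ Z]
      append_rows_mult[OF X Z S] compensator G F X Z by simp
qed

context
  fixes n m p N :: nat and A B C D X U :: "real mat" and s :: "real vec"
  assumes dims: "A \<in> carrier_mat n n" "B \<in> carrier_mat n m" "C \<in> carrier_mat p n" "D \<in> carrier_mat p m"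
    and N: "N > 0"
    and feasible: "feasible1 n m p N A B C D s X U"
begin

lemma feasible_carrier: "X \<in> carrier_mat n (n * N)" "U \<in> carrier_mat m (n * N)"
  using feasible unfolding feasible1_def by auto

lemma feasible_plant: "A * X + B * U = X * shift_mat (n * N) n"
  using feasible unfolding feasible1_def kron_shiftP_one_mat by auto

lemma feasible_output_bound: "i < p \<Longrightarrow> j < n * N \<Longrightarrow> \<bar>(C * X + D * U) $$ (i,j)\<bar> \<le> s $ i"
  using feasible unfolding feasible1_def by auto

lemma feasible_initial:
  assumes "x \<in> carrier_vec n"
  shows "X *\<^sub>v kron_vec (unit_vec N 0) x = x"
proof -
  have "X * kron_mat (mat_of_cols N [unit_vec N 0]) (1\<^sub>m n) = 1\<^sub>m n"
    using feasible unfolding feasible1_def by blast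
  then show ?thesis
    by (rule mult_kron_vec_first_unit_vec[OF feasible_carrier(1) _ assms])
qed

lemma feasible_first_block: "i < n \<Longrightarrow> j < n \<Longrightarrow> X $$ (i,j) = (if i = j then 1 else 0)"
proof -
  assume ij: "i < n" "j < n"
  moreover have "n \<le> n * N" using N by simp
  ultimately have j: "j < n * N" by linarith
  have "X $$ (i,j) = (X *\<^sub>v unit_vec (n * N) j) $ i"
    using ij j feasible_carrier(1) by (simp add: mult_unit_vec_eq_col)
  also have "\<dots> = (X *\<^sub>v kron_vec (unit_vec N 0) (unit_vec n j)) $ i"
    using kron_vec_unit_vec_unit_vec[OF ij(2), of N 0] by simp
  also have "\<dots> = (if i = j then 1 else 0)"
    using feasible_initial[OF unit_vec_carrier] ij by simp
  finally show ?thesis .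
qed

lemma det_feasible_append_rows_Zmat: "det (X @\<^sub>r Zmat n N) = 1"
  by (rule det_append_rows_Zmat[OF feasible_carrier(1) N feasible_first_block])

lemma ex1_compensator:
  "\<exists>K H G F. K \<in> carrier_mat m n \<and> H \<in> carrier_mat m (n * (N - 1)) \<and>
      G \<in> carrier_mat (n * (N - 1)) n \<and> F \<in> carrier_mat (n * (N - 1)) (n * (N - 1)) \<and>
      four_block_mat K H G F * (X @\<^sub>r Zmat n N) = U @\<^sub>r Vmat n N \<and>
      (\<forall>K' H' G' F'. K' \<in> carrier_mat m n \<and> H' \<in> carrier_mat m (n * (N - 1)) \<and>
         G' \<in> carrier_mat (n * (N - 1)) n \<and> F' \<in> carrier_mat (n * (N - 1)) (n * (N - 1)) \<and>
         four_block_mat K' H' G' F' * (X @\<^sub>r Zmat n N) = U @\<^sub>r Vmat n N \<longrightarrow>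
         K' = K \<and> H' = H \<and> G' = G \<and> F' = F)"
proof (rule ex1_four_block_left_solution)
  show "X @\<^sub>r Zmat n N \<in> carrier_mat (n + n * (N - 1)) (n + n * (N - 1))"
    using carrier_append_rows[OF feasible_carrier(1) Zmat_carrier] add_mult_diff_one[OF N, of n] by simp
  show "det (X @\<^sub>r Zmat n N) \<noteq> 0"
    using det_feasible_append_rows_Zmat by simp
  show "U @\<^sub>r Vmat n N \<in> carrier_mat (m + n * (N - 1)) (n + n * (N - 1))"
  proof -
    have "Vmat n N \<in> carrier_mat (n * (N - 1)) (n * N)"
      unfolding Vmat_eq by (rule mult_carrier_mat[OF Zmat_carrier shift_mat_carrier])
    then show ?thesis using carrier_append_rows[OF feasible_carrier(2)] add_mult_diff_one[OF N, of n] by simp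
  qed
qed

context
  fixes K H G F :: "real mat"
  assumes gains: "K \<in> carrier_mat m n" "H \<in> carrier_mat m (n * (N - 1))"
      "G \<in> carrier_mat (n * (N - 1)) n" "F \<in> carrier_mat (n * (N - 1)) (n * (N - 1))"
    and solution: "four_block_mat K H G F * (X @\<^sub>r Zmat n N) = U @\<^sub>r Vmat n N"
begin

lemma compensator_equations:
  "K * X + H * Zmat n N = U" "G * X + F * Zmat n N = Zmat n N * shift_mat (n * N) n"
proof -
  have "(K * X + H * Zmat n N) @\<^sub>r (G * X + F * Zmat n N) = U @\<^sub>r (Zmat n N * shift_mat (n * N) n)"
    using four_block_mat_mult_append_rows[OF gains feasible_carrier(1) Zmat_carrier] solution
    by (simp add: Vmat_eq)
  moreover have "K * X + H * Zmat n N \<in> carrier_mat m (n * N)"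
    "G * X + F * Zmat n N \<in> carrier_mat (n * (N - 1)) (n * N)"
    "Zmat n N * shift_mat (n * N) n \<in> carrier_mat (n * (N - 1)) (n * N)"
    using gains feasible_carrier Zmat_carrier[of n N] by auto
  ultimately show "K * X + H * Zmat n N = U" "G * X + F * Zmat n N = Zmat n N * shift_mat (n * N) n"
    using append_rows_eq_iff feasible_carrier(2) by blast+
qed

lemma compensator_trajectory:
  assumes x0: "x0 \<in> carrier_vec n"
  shows "cl_x A B K H G F x0 (0\<^sub>v (n * (N - 1))) t = X *\<^sub>v kron_vec (unit_vec N t) x0 \<and>
         cl_u A B K H G F x0 (0\<^sub>v (n * (N - 1))) t = U *\<^sub>v kron_vec (unit_vec N t) x0"
proof -
  have "\<And>t. kron_vec (unit_vec N (Suc t)) x0 = shift_mat (n * N) n *\<^sub>v kron_vec (unit_vec N t) x0"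
    using shift_mat_mult_kron_vec_unit_vec[OF x0] by simp
  from closed_loop_trajectory[where \<xi> = "\<lambda>t. kron_vec (unit_vec N t) x0",
      OF dims(1,2) gains feasible_carrier Zmat_carrier[of n N] shift_mat_carrier[of "n * N" n]
      feasible_plant compensator_equations kron_vec_unit_vec_carrier[OF x0, of N] this]
  show ?thesis
    using feasible_initial[OF x0] Zmat_mult_kron_vec_first_unit_vec[OF x0 N] by simp
qed

lemma compensator_deadbeat:
  assumes x0: "x0 \<in> carrier_vec n"
  shows "cl_x A B K H G F x0 (0\<^sub>v (n * (N - 1))) N = 0\<^sub>v n"
  using compensator_trajectory[OF x0] kron_vec_unit_vec_beyond[OF x0 order_refl] feasible_carrier(1)
  by (auto intro!: eq_vecI)

lemma compensator_output_bound:
  assumes i: "i < n" and t: "t < N" and j: "j < p"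
  shows "- (s $ j) \<le> (C *\<^sub>v cl_x A B K H G F (unit_vec n i) (0\<^sub>v (n * (N - 1))) t
           + D *\<^sub>v cl_u A B K H G F (unit_vec n i) (0\<^sub>v (n * (N - 1))) t) $ j \<and>
         (C *\<^sub>v cl_x A B K H G F (unit_vec n i) (0\<^sub>v (n * (N - 1))) t
           + D *\<^sub>v cl_u A B K H G F (unit_vec n i) (0\<^sub>v (n * (N - 1))) t) $ j \<le> s $ j"
proof -
  let ?l = "t * n + i"
  have l: "?l < n * N"
  proof -
    have "?l < Suc t * n" using i by simp
    also have "\<dots> \<le> N * n" using t by (intro mult_le_mono1) simp
    finally show ?thesis by (simp add: mult.commute)
  qed
  have "C *\<^sub>v cl_x A B K H G F (unit_vec n i) (0\<^sub>v (n * (N - 1))) t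
        + D *\<^sub>v cl_u A B K H G F (unit_vec n i) (0\<^sub>v (n * (N - 1))) t
      = (C * X + D * U) *\<^sub>v unit_vec (n * N) ?l"
    using compensator_trajectory[OF unit_vec_carrier] kron_vec_unit_vec_unit_vec[OF i]
      add_mult_mat_mult_vec[OF dims(3) feasible_carrier(1) dims(4) feasible_carrier(2)]
    by simp
  also have "\<dots> = col (C * X + D * U) ?l"
    using dims feasible_carrier l by (intro mult_unit_vec_eq_col) auto
  finally have "(C *\<^sub>v cl_x A B K H G F (unit_vec n i) (0\<^sub>v (n * (N - 1))) t
        + D *\<^sub>v cl_u A B K H G F (unit_vec n i) (0\<^sub>v (n * (N - 1))) t) $ j = (C * X + D * U) $$ (j, ?l)"
    using dims feasible_carrier l j by simp
  with feasible_output_bound[OF j l] show ?thesis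
    by (metis abs_le_D1 abs_le_D2 minus_le_iff)
qed

lemma compensator_schur_stable: "schur_stable (four_block_mat (A + B * K) (B * H) G F)"
proof (rule similar_to_nilpotent_imp_schur_stable)
  show "four_block_mat (A + B * K) (B * H) G F \<in> carrier_mat (n * N) (n * N)"
    using four_block_carrier_mat[of "A + B * K" n n F "n * (N - 1)" "n * (N - 1)" "B * H" G]
      dims gains add_mult_diff_one[OF N, of n]
    by auto
  show "X @\<^sub>r Zmat n N \<in> carrier_mat (n * N) (n * N)"
    using carrier_append_rows[OF feasible_carrier(1) Zmat_carrier] add_mult_diff_one[OF N, of n] by simp
  show "det (X @\<^sub>r Zmat n N) \<noteq> 0"
    using det_feasible_append_rows_Zmat by simp
  show "four_block_mat (A + B * K) (B * H) G F * (X @\<^sub>r Zmat n N) = (X @\<^sub>r Zmat n N) * shift_mat (n * N) n"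
    by (rule closed_loop_mat_intertwines[OF dims(1,2) gains feasible_carrier Zmat_carrier
          shift_mat_carrier feasible_plant compensator_equations])
  show "shift_mat (n * N) n ^\<^sub>m N = 0\<^sub>m (n * N) (n * N)"
    by (simp add: shift_mat_pow shift_mat_eq_zero)
qed simp

lemma compensator_properties:
  "(\<forall>x0 \<in> carrier_vec n.
      (\<forall>t<N. cl_u A B K H G F x0 (0\<^sub>v (n * (N - 1))) t = U *\<^sub>v kron_vec (unit_vec N t) x0 \<and>
             cl_x A B K H G F x0 (0\<^sub>v (n * (N - 1))) t = X *\<^sub>v kron_vec (unit_vec N t) x0) \<and>
      cl_x A B K H G F x0 (0\<^sub>v (n * (N - 1))) N = 0\<^sub>v n)
   \<and> (\<forall>i<n. \<forall>t<N. \<forall>j<p.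
      - (s $ j) \<le> (C *\<^sub>v cl_x A B K H G F (unit_vec n i) (0\<^sub>v (n * (N - 1))) t
                   + D *\<^sub>v cl_u A B K H G F (unit_vec n i) (0\<^sub>v (n * (N - 1))) t) $ j \<and>
      (C *\<^sub>v cl_x A B K H G F (unit_vec n i) (0\<^sub>v (n * (N - 1))) t
                   + D *\<^sub>v cl_u A B K H G F (unit_vec n i) (0\<^sub>v (n * (N - 1))) t) $ j \<le> s $ j)
   \<and> schur_stable (four_block_mat (A + B * K) (B * H) G F)"
  using compensator_trajectory compensator_deadbeat compensator_output_bound compensator_schur_stable
  by auto

end

end

theorem theorem1:
  fixes n m p N :: nat and A B C D X U :: "real mat" and s :: "real vec"
  assumes dims: "A \<in> carrier_mat n n" "B \<in> carrier_mat n m" "C \<in> carrier_mat p n" "D \<in> carrier_mat p m"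
    and mn: "m \<le> n" and N2: "N \<ge> 2"
    and s: "s \<in> carrier_vec p" "\<forall>i<p. s $ i \<ge> 0"
    and reach: "reachable n m A B"
    and opt: "minimizer1 n m p N A B C D s X U"
  shows
   "(\<exists>K H G F. K \<in> carrier_mat m n \<and> H \<in> carrier_mat m (n * (N - 1)) \<and>
        G \<in> carrier_mat (n * (N - 1)) n \<and> F \<in> carrier_mat (n * (N - 1)) (n * (N - 1)) \<and>
        four_block_mat K H G F * (X @\<^sub>r Zmat n N) = U @\<^sub>r Vmat n N \<and>
        (\<forall>K' H' G' F'. K' \<in> carrier_mat m n \<and> H' \<in> carrier_mat m (n * (N - 1)) \<and>
           G' \<in> carrier_mat (n * (N - 1)) n \<and> F' \<in> carrier_mat (n * (N - 1)) (n * (N - 1)) \<and>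
           four_block_mat K' H' G' F' * (X @\<^sub>r Zmat n N) = U @\<^sub>r Vmat n N \<longrightarrow>
           K' = K \<and> H' = H \<and> G' = G \<and> F' = F))
    \<and> (\<forall>K H G F. K \<in> carrier_mat m n \<and> H \<in> carrier_mat m (n * (N - 1)) \<and>
        G \<in> carrier_mat (n * (N - 1)) n \<and> F \<in> carrier_mat (n * (N - 1)) (n * (N - 1)) \<and>
        four_block_mat K H G F * (X @\<^sub>r Zmat n N) = U @\<^sub>r Vmat n N \<longrightarrow>
        (\<forall>x0 \<in> carrier_vec n.
           (\<forall>t<N. cl_u A B K H G F x0 (0\<^sub>v (n * (N - 1))) t = U *\<^sub>v kron_vec (unit_vec N t) x0 \<and>
                  cl_x A B K H G F x0 (0\<^sub>v (n * (N - 1))) t = X *\<^sub>v kron_vec (unit_vec N t) x0) \<and>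
           cl_x A B K H G F x0 (0\<^sub>v (n * (N - 1))) N = 0\<^sub>v n)
      \<and> (\<forall>i<n. \<forall>t<N. \<forall>j<p.
           - (s $ j) \<le> (C *\<^sub>v cl_x A B K H G F (unit_vec n i) (0\<^sub>v (n * (N - 1))) t
                        + D *\<^sub>v cl_u A B K H G F (unit_vec n i) (0\<^sub>v (n * (N - 1))) t) $ j \<and>
           (C *\<^sub>v cl_x A B K H G F (unit_vec n i) (0\<^sub>v (n * (N - 1))) t
                        + D *\<^sub>v cl_u A B K H G F (unit_vec n i) (0\<^sub>v (n * (N - 1))) t) $ j \<le> s $ j)
      \<and> schur_stable (four_block_mat (A + B * K) (B * H) G F))"
proof -
  have N: "N > 0" using N2 by simp
  have feasible: "feasible1 n m p N A B C D s X U"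
    using opt unfolding minimizer1_def by simp
  show ?thesis
    by (intro conjI[OF ex1_compensator[OF dims N feasible]] allI impI, elim conjE)
      (rule compensator_properties[OF dims N feasible])
qed

end
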